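(* Let $\mathbb{F}$ be a field, $D=(X,E,s,t)$ a finite directed multigraph, $U$ an $\mathbb{F}$-vector space and $\phi:X\to U$ a map. For each weakly connected component $C$ of $D$ fix a basepoint $r_C\in C$ and define the linear map $A_\phi:\bigoplus_C\mathbb{F}^{C\setminus\{r_C\}}\to U$ by $A_\phi(\mathbf{1}_x)=\phi(x)-\phi(r_C)$ for $x\in C\setminus\{r_C\}$. Then: (1) $\delta_\phi=\dim_{\mathbb{F}}\mathrm{Ker}(A_\phi)$, and this value is independent of the choice of basepoints; (2) $\delta_\phi=0$ if and only if the family $(\phi(x)-\phi(r_C))_{C,\,x\in C\setminus\{r_C\}}$ is $\mathbb{F}$-linearly independent in $U$; (3) if $D$ is (weakly) connected, then $\delta_\phi=0$ if and only if the family $(\phi(x))_{x\in X}$ is affinely independent in $U$.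
   Context: A finite directed multigraph $D=(X,E,s,t)$ has finite vertex set $X$, finite edge set $E$, and maps $s,t:E\to X$; loops and parallel edges allowed. $B_D:\mathbb{F}^E\to\mathbb{F}^X$ is the linear map with $B_D(\mathbf{1}_e)=\mathbf{1}_{t(e)}-\mathbf{1}_{s(e)}$; $\hat\phi:\mathbb{F}^X\to U$ is the linear extension $\mathbf{1}_x\mapsto\phi(x)$. The defect invariant is $\delta_\phi:=\dim_{\mathbb{F}}(\mathrm{Im}(B_D)\cap\mathrm{Ker}(\hat\phi))$. *)

theory Defs
  imports Complex_Main "HOL-Library.Function_Algebras"
begin

text \<open>Scalar multiplication on the coordinate spaces \<open>'i \<Rightarrow> 'f\<close> (pointwise).
  The spaces F^S for a finite set S are modelled as the functions supported in S.\<close>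
definition fscale :: "'f::field \<Rightarrow> ('i \<Rightarrow> 'f) \<Rightarrow> ('i \<Rightarrow> 'f)" where
  "fscale c v = (\<lambda>i. c * v i)"

definition supported_in :: "'i set \<Rightarrow> ('i \<Rightarrow> 'f::zero) set" where
  "supported_in S = {v. \<forall>i. i \<notin> S \<longrightarrow> v i = 0}"

definition incidence_map ::
  "'e set \<Rightarrow> ('e \<Rightarrow> 'x) \<Rightarrow> ('e \<Rightarrow> 'x) \<Rightarrow> ('e \<Rightarrow> 'f::field) \<Rightarrow> ('x \<Rightarrow> 'f)" where
  "incidence_map E s t v =
     (\<lambda>x. \<Sum>e\<in>E. v e * ((if t e = x then 1 else 0) - (if s e = x then 1 else 0)))"

definition lin_ext ::
  "('f \<Rightarrow> 'u \<Rightarrow> 'u) \<Rightarrow> 'x set \<Rightarrow> ('x \<Rightarrow> 'u::ab_group_add) \<Rightarrow> ('x \<Rightarrow> 'f) \<Rightarrow> 'u" where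
  "lin_ext scale X \<phi> w = (\<Sum>x\<in>X. scale (w x) (\<phi> x))"

definition defect ::
  "('f::field \<Rightarrow> 'u \<Rightarrow> 'u) \<Rightarrow> 'x set \<Rightarrow> 'e set \<Rightarrow> ('e \<Rightarrow> 'x) \<Rightarrow> ('e \<Rightarrow> 'x)
     \<Rightarrow> ('x \<Rightarrow> 'u::ab_group_add) \<Rightarrow> nat" where
  "defect scale X E s t \<phi> =
     vector_space.dim (fscale :: 'f \<Rightarrow> ('x \<Rightarrow> 'f) \<Rightarrow> _)
       ((incidence_map E s t ` supported_in E) \<inter>
        {w \<in> supported_in X. lin_ext scale X \<phi> w = 0})"

definition weak_rel :: "'x set \<Rightarrow> 'e set \<Rightarrow> ('e \<Rightarrow> 'x) \<Rightarrow> ('e \<Rightarrow> 'x) \<Rightarrow> ('x \<times> 'x) set" where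
  "weak_rel X E s t = (Id_on X \<union> (\<Union>e\<in>E. {(s e, t e), (t e, s e)}))\<^sup>*"

definition weak_components :: "'x set \<Rightarrow> 'e set \<Rightarrow> ('e \<Rightarrow> 'x) \<Rightarrow> ('e \<Rightarrow> 'x) \<Rightarrow> 'x set set" where
  "weak_components X E s t = X // weak_rel X E s t"

definition weakly_connected :: "'x set \<Rightarrow> 'e set \<Rightarrow> ('e \<Rightarrow> 'x) \<Rightarrow> ('e \<Rightarrow> 'x) \<Rightarrow> bool" where
  "weakly_connected X E s t \<longleftrightarrow> (\<forall>x\<in>X. \<forall>y\<in>X. (x, y) \<in> weak_rel X E s t)"

definition basepoint_choice ::
  "'x set \<Rightarrow> 'e set \<Rightarrow> ('e \<Rightarrow> 'x) \<Rightarrow> ('e \<Rightarrow> 'x) \<Rightarrow> ('x set \<Rightarrow> 'x) \<Rightarrow> bool" where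
  "basepoint_choice X E s t r \<longleftrightarrow> (\<forall>C\<in>weak_components X E s t. r C \<in> C)"

text \<open>Index set of the domain of A_\<phi>: the disjoint union over components C of C - {r C}
  (the components partition X, so this is X minus the basepoints).\<close>
definition nonbase :: "'x set \<Rightarrow> 'e set \<Rightarrow> ('e \<Rightarrow> 'x) \<Rightarrow> ('e \<Rightarrow> 'x) \<Rightarrow> ('x set \<Rightarrow> 'x) \<Rightarrow> 'x set" where
  "nonbase X E s t r = (\<Union>C\<in>weak_components X E s t. C - {r C})"

definition rel_vec ::
  "'x set \<Rightarrow> 'e set \<Rightarrow> ('e \<Rightarrow> 'x) \<Rightarrow> ('e \<Rightarrow> 'x) \<Rightarrow> ('x set \<Rightarrow> 'x) \<Rightarrow> ('x \<Rightarrow> 'u::ab_group_add) \<Rightarrow> 'x \<Rightarrow> 'u" where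
  "rel_vec X E s t r \<phi> x = \<phi> x - \<phi> (r (weak_rel X E s t `` {x}))"

definition A_map ::
  "('f \<Rightarrow> 'u \<Rightarrow> 'u) \<Rightarrow> 'x set \<Rightarrow> 'e set \<Rightarrow> ('e \<Rightarrow> 'x) \<Rightarrow> ('e \<Rightarrow> 'x) \<Rightarrow> ('x set \<Rightarrow> 'x)
     \<Rightarrow> ('x \<Rightarrow> 'u::ab_group_add) \<Rightarrow> ('x \<Rightarrow> 'f) \<Rightarrow> 'u" where
  "A_map scale X E s t r \<phi> w = (\<Sum>x\<in>nonbase X E s t r. scale (w x) (rel_vec X E s t r \<phi> x))"

definition ker_A ::
  "('f::field \<Rightarrow> 'u \<Rightarrow> 'u) \<Rightarrow> 'x set \<Rightarrow> 'e set \<Rightarrow> ('e \<Rightarrow> 'x) \<Rightarrow> ('e \<Rightarrow> 'x) \<Rightarrow> ('x set \<Rightarrow> 'x)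
     \<Rightarrow> ('x \<Rightarrow> 'u::ab_group_add) \<Rightarrow> ('x \<Rightarrow> 'f) set" where
  "ker_A scale X E s t r \<phi> =
     {w \<in> supported_in (nonbase X E s t r). A_map scale X E s t r \<phi> w = 0}"

definition lin_indep_family :: "('f::field \<Rightarrow> 'u \<Rightarrow> 'u) \<Rightarrow> 'i set \<Rightarrow> ('i \<Rightarrow> 'u::ab_group_add) \<Rightarrow> bool" where
  "lin_indep_family scale I v \<longleftrightarrow>
     (\<forall>c. (\<Sum>i\<in>I. scale (c i) (v i)) = 0 \<longrightarrow> (\<forall>i\<in>I. c i = 0))"

definition aff_indep_family :: "('f::field \<Rightarrow> 'u \<Rightarrow> 'u) \<Rightarrow> 'i set \<Rightarrow> ('i \<Rightarrow> 'u::ab_group_add) \<Rightarrow> bool" where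
  "aff_indep_family scale I v \<longleftrightarrow>
     (\<forall>c. (\<Sum>i\<in>I. c i) = 0 \<and> (\<Sum>i\<in>I. scale (c i) (v i)) = 0 \<longrightarrow> (\<forall>i\<in>I. c i = 0))"

end

theory Submission
  imports Defs
begin

(* Join every vertex y that is not a basepoint to the basepoint r(y) of its weak component.
  The map u |-> sum_y u(y) (1_y - 1_r(y)), i.e. the incidence map of this star forest, is an
  isomorphism from F^(X - basepoints) onto Im B_D: its values lie in Im B_D because 1_c - 1_a is
  in Im B_D whenever a and c are joined by an undirected path, it is injective because it does
  not change the coordinates off the basepoints, and it is onto because an element of Im B_D
  sums to zero over every component and is therefore determined by those coordinates.
  Composing it with phi-hat gives exactly A_phi, so it maps Ker A_phi onto
  Im B_D \<inter> Ker phi-hat, which proves (1). Part (2) says that a subspace of a finite-dimensional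
  space has dimension 0 iff it is trivial, and (3) that (phi x)_x is affinely independent iff
  (phi x - phi rho)_(x \<noteq> rho) is linearly independent. *)

lemma sum_fun_apply: "(sum f A) x = (\<Sum>a\<in>A. f a x)"
  by (induction A rule: infinite_finite_induct) auto

interpretation F: vector_space "fscale :: 'f::field \<Rightarrow> ('x \<Rightarrow> 'f) \<Rightarrow> _"
  by unfold_locales (auto simp: fscale_def fun_eq_iff algebra_simps)

(* The library versions dim_eq_0 and dim_image_eq need a finite-dimensional ambient space,
  which the coordinate space 'x \<Rightarrow> 'f is not in general. *)
lemma (in vector_space) dim_eq_0_iff_subset_zero:
  assumes "S \<subseteq> span W" and "finite W"
  shows "dim S = 0 \<longleftrightarrow> S \<subseteq> {0}"
proof -
  obtain B where B: "B \<subseteq> S" "independent B" "S \<subseteq> span B" "card B = dim S"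
    by (rule basis_exists)
  have "finite B"
    using independent_span_bound[OF assms(2) B(2)] B(1) assms(1) by blast
  then have "dim S = 0 \<longleftrightarrow> B = {}"
    using B(4) by auto
  also have "\<dots> \<longleftrightarrow> S \<subseteq> {0}"
    using B(1-3) dependent_zero by auto
  finally show ?thesis .
qed

lemma (in Vector_Spaces.linear) dim_image_eq_of_inj_on_span:
  assumes "inj_on f (vs1.span S)"
  shows "vs2.dim (f ` S) = vs1.dim S"
proof -
  obtain B where B: "B \<subseteq> S" "vs1.independent B" "S \<subseteq> vs1.span B" "card B = vs1.dim S"
    by (rule vs1.basis_exists)
  have span_B: "vs1.span B = vs1.span S"
    using B(1,3) vs1.span_mono vs1.span_span by blast
  have "vs2.span (f ` B) = vs2.span (f ` S)"
    by (simp add: span_image span_B)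
  moreover have "vs2.independent (f ` B)"
    using independent_injective_image[OF B(2)] assms span_B by simp
  ultimately have "vs2.dim (f ` S) = card (f ` B)"
    by (rule vs2.dim_eq_card)
  also have "\<dots> = card B"
    using assms B(1) vs1.span_superset by (meson card_image inj_on_subset subset_trans)
  finally show ?thesis
    using B(4) by simp
qed

definition unit_vec :: "'i \<Rightarrow> 'i \<Rightarrow> 'f::{zero,one}" where
  "unit_vec a = (\<lambda>z. if a = z then 1 else 0)"

lemma subspace_supported_in: "F.subspace (supported_in S)"
  by (auto simp: F.subspace_def supported_in_def fscale_def)

lemma supported_in_mono: "S \<subseteq> T \<Longrightarrow> supported_in S \<subseteq> supported_in T"
  unfolding supported_in_def by blast

lemma supported_in_subset_span:
  fixes S :: "'i set"
  assumes "finite S"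
  shows "supported_in S \<subseteq> F.span (unit_vec ` S :: ('i \<Rightarrow> 'f::field) set)"
proof
  fix w :: "'i \<Rightarrow> 'f" assume "w \<in> supported_in S"
  then have "w = (\<Sum>i\<in>S. fscale (w i) (unit_vec i))"
    using assms
    by (auto simp: fun_eq_iff sum_fun_apply fscale_def unit_vec_def supported_in_def
        if_distrib[where f="\<lambda>c. _ * c"] cong: if_cong)
  also have "\<dots> \<in> F.span (unit_vec ` S)"
    by (intro F.span_sum F.span_scale F.span_base) auto
  finally show "w \<in> F.span (unit_vec ` S)" .
qed

lemma lin_indep_family_iff_kernel_trivial:
  "lin_indep_family scale I v \<longleftrightarrow> {c \<in> supported_in I. (\<Sum>i\<in>I. scale (c i) (v i)) = 0} \<subseteq> {0}"
proof
  assume "lin_indep_family scale I v"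
  then show "{c \<in> supported_in I. (\<Sum>i\<in>I. scale (c i) (v i)) = 0} \<subseteq> {0}"
    unfolding lin_indep_family_def supported_in_def by (auto simp: fun_eq_iff) metis
next
  assume trivial: "{c \<in> supported_in I. (\<Sum>i\<in>I. scale (c i) (v i)) = 0} \<subseteq> {0}"
  show "lin_indep_family scale I v"
    unfolding lin_indep_family_def
  proof (intro allI impI ballI)
    fix c i assume "(\<Sum>i\<in>I. scale (c i) (v i)) = 0" and "i \<in> I"
    moreover define c' where "c' = (\<lambda>i. if i \<in> I then c i else 0)"
    ultimately have "c' \<in> {c \<in> supported_in I. (\<Sum>i\<in>I. scale (c i) (v i)) = 0}"
      by (simp add: supported_in_def)
    then have "c' i = 0"
      using trivial by auto
    then show "c i = 0"
      using \<open>i \<in> I\<close> by (simp add: c'_def)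
  qed
qed

lemma lin_indep_family_cong:
  "(\<And>i. i \<in> I \<Longrightarrow> v i = w i) \<Longrightarrow> lin_indep_family scale I v \<longleftrightarrow> lin_indep_family scale I w"
  unfolding lin_indep_family_def by (metis (no_types, lifting) sum.cong)

lemma aff_indep_family_iff_lin_indep_family_diff:
  fixes scale :: "'f::field \<Rightarrow> 'u::ab_group_add \<Rightarrow> 'u" and X :: "'i set"
  assumes "vector_space scale" and "finite X" and "\<rho> \<in> X"
  shows "aff_indep_family scale X \<phi> \<longleftrightarrow> lin_indep_family scale (X - {\<rho>}) (\<lambda>x. \<phi> x - \<phi> \<rho>)"
proof -
  interpret vector_space scale
    by (rule assms(1))
  define complete :: "('i \<Rightarrow> 'f) \<Rightarrow> 'i \<Rightarrow> 'f"
    where "complete c = c(\<rho> := - (\<Sum>x\<in>X - {\<rho>}. c x))" for c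
  have split: "sum g X = g \<rho> + sum g (X - {\<rho>})" for g :: "'i \<Rightarrow> 'b::comm_monoid_add"
    using sum.remove[OF assms(2,3)] .
  have complete_on_rest: "sum (\<lambda>x. g (complete c x)) (X - {\<rho>}) = sum (\<lambda>x. g (c x)) (X - {\<rho>})"
    for c and g :: "'f \<Rightarrow> 'b::comm_monoid_add"
    by (rule sum.cong) (auto simp: complete_def)
  have sum_complete: "sum (complete c) X = 0" for c
    using split[of "complete c"] complete_on_rest[of "\<lambda>a. a" c] by (simp add: complete_def)
  have combination_complete:
    "(\<Sum>x\<in>X. scale (complete c x) (\<phi> x)) = (\<Sum>x\<in>X - {\<rho>}. scale (c x) (\<phi> x - \<phi> \<rho>))" for c
    using split[of "\<lambda>x. scale (complete c x) (\<phi> x)"] complete_on_rest[of "\<lambda>a. scale a _" c]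
    by (simp add: complete_def scale_right_diff_distrib sum_subtractf scale_sum_left scale_minus_left)
  have complete_eq: "complete c = c" if "sum c X = 0" for c
    using that split[of c] by (simp add: complete_def fun_eq_iff add_eq_0_iff2)
  show ?thesis
  proof
    assume aff: "aff_indep_family scale X \<phi>"
    show "lin_indep_family scale (X - {\<rho>}) (\<lambda>x. \<phi> x - \<phi> \<rho>)"
      unfolding lin_indep_family_def
    proof (intro allI impI ballI)
      fix c x
      assume "(\<Sum>x\<in>X - {\<rho>}. scale (c x) (\<phi> x - \<phi> \<rho>)) = 0" and x: "x \<in> X - {\<rho>}"
      then have "\<forall>y\<in>X. complete c y = 0"
        using aff sum_complete combination_complete unfolding aff_indep_family_def by metis
      then show "c x = 0"
        using x by (auto simp: complete_def)
    qed
  next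
    assume lin: "lin_indep_family scale (X - {\<rho>}) (\<lambda>x. \<phi> x - \<phi> \<rho>)"
    show "aff_indep_family scale X \<phi>"
      unfolding aff_indep_family_def
    proof (intro allI impI ballI)
      fix c x
      assume c: "sum c X = 0 \<and> (\<Sum>x\<in>X. scale (c x) (\<phi> x)) = 0" and "x \<in> X"
      then have rest: "\<forall>y\<in>X - {\<rho>}. c y = 0"
        using lin combination_complete[of c] complete_eq[of c] unfolding lin_indep_family_def by metis
      then have "c \<rho> = 0"
        using c split[of c] by simp
      then show "c x = 0"
        using rest \<open>x \<in> X\<close> by blast
    qed
  qed
qed

lemma linear_incidence_map:
  "Vector_Spaces.linear fscale fscale (incidence_map E s t :: ('e \<Rightarrow> 'f::field) \<Rightarrow> _)"
  unfolding Vector_Spaces.linear_iff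
  by (auto simp: F.vector_space_axioms incidence_map_def fscale_def fun_eq_iff
      sum.distrib sum_distrib_left distrib_right mult.assoc)

lemma incidence_map_eq_sum:
  "incidence_map E s t v = (\<Sum>e\<in>E. fscale (v e) (unit_vec (t e) - unit_vec (s e)))"
  by (simp add: fun_eq_iff sum_fun_apply incidence_map_def fscale_def unit_vec_def)

lemma incidence_map_unit_vec:
  assumes "finite E" and "e \<in> E"
  shows "incidence_map E s t (unit_vec e) = unit_vec (t e) - unit_vec (s e)"
  using assms
  by (auto simp: incidence_map_def unit_vec_def fun_eq_iff if_distrib[where f="\<lambda>c. c * _"] cong: if_cong)

lemma incidence_map_supported_in:
  assumes "s ` E \<subseteq> X" and "t ` E \<subseteq> X"
  shows "incidence_map E s t v \<in> supported_in X"
  using assms by (fastforce simp: supported_in_def incidence_map_def intro!: sum.neutral)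

lemma subspace_incidence_image: "F.subspace (incidence_map E s t ` supported_in E)"
proof -
  interpret Vector_Spaces.linear fscale fscale "incidence_map E s t"
    by (rule linear_incidence_map)
  show ?thesis
    by (rule subspace_image[OF subspace_supported_in])
qed

lemma sum_incidence_map_eq_0:
  assumes "finite C" and "\<forall>e\<in>E. s e \<in> C \<longleftrightarrow> t e \<in> C"
  shows "(\<Sum>y\<in>C. incidence_map E s t v y) = 0"
proof -
  have "(\<Sum>y\<in>C. incidence_map E s t v y)
      = (\<Sum>e\<in>E. v e * ((\<Sum>y\<in>C. unit_vec (t e) y) - (\<Sum>y\<in>C. unit_vec (s e) y)))"
    unfolding incidence_map_def unit_vec_def
    by (subst sum.swap) (simp add: sum_distrib_left sum_subtractf right_diff_distrib)
  also have "\<dots> = 0"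
    using assms by (simp add: unit_vec_def)
  finally show ?thesis .
qed

lemma lin_ext_incidence_map:
  assumes "vector_space scale" and "finite X" and "s ` E \<subseteq> X" and "t ` E \<subseteq> X"
  shows "lin_ext scale X \<phi> (incidence_map E s t v) = (\<Sum>e\<in>E. scale (v e) (\<phi> (t e) - \<phi> (s e)))"
proof -
  interpret vector_space scale
    by (rule assms(1))
  have "lin_ext scale X \<phi> (incidence_map E s t v)
      = (\<Sum>e\<in>E. \<Sum>x\<in>X. scale (v e * (unit_vec (t e) x - unit_vec (s e) x)) (\<phi> x))"
    unfolding lin_ext_def incidence_map_def unit_vec_def by (subst sum.swap) (simp add: scale_sum_left)
  also have "\<dots> = (\<Sum>e\<in>E. scale (v e) (\<phi> (t e)) - scale (v e) (\<phi> (s e)))"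
  proof (rule sum.cong[OF refl])
    fix e assume "e \<in> E"
    then have "t e \<in> X" "s e \<in> X"
      using assms(3,4) by auto
    then show "(\<Sum>x\<in>X. scale (v e * (unit_vec (t e) x - unit_vec (s e) x)) (\<phi> x))
        = scale (v e) (\<phi> (t e)) - scale (v e) (\<phi> (s e))"
      using assms(2)
      by (simp add: unit_vec_def right_diff_distrib scale_left_diff_distrib sum_subtractf
          if_distrib[where f="\<lambda>c. scale (_ * c) _"] cong: if_cong)
  qed
  finally show ?thesis
    by (simp add: scale_right_diff_distrib)
qed

lemma edge_in_weak_rel: "e \<in> E \<Longrightarrow> (s e, t e) \<in> weak_rel X E s t"
  unfolding weak_rel_def by blast

lemma weak_rel_sym: "(a, c) \<in> weak_rel X E s t \<Longrightarrow> (c, a) \<in> weak_rel X E s t"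
proof -
  have "sym (weak_rel X E s t)"
    unfolding weak_rel_def by (rule sym_rtrancl) (auto simp: sym_def)
  then show "(a, c) \<in> weak_rel X E s t \<Longrightarrow> (c, a) \<in> weak_rel X E s t"
    by (rule symD)
qed

lemma weak_rel_trans:
  "(a, b) \<in> weak_rel X E s t \<Longrightarrow> (b, c) \<in> weak_rel X E s t \<Longrightarrow> (a, c) \<in> weak_rel X E s t"
  unfolding weak_rel_def by (rule rtrancl_trans)

lemma weak_rel_closed:
  assumes "(a, c) \<in> weak_rel X E s t" and "a \<in> X" and "s ` E \<subseteq> X" and "t ` E \<subseteq> X"
  shows "c \<in> X"
  using assms(1,2) unfolding weak_rel_def
  by (induction rule: rtrancl_induct) (use assms(3,4) in auto)

lemma edge_vector_in_incidence_image:
  assumes "finite E" and "e \<in> E"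
  shows "(unit_vec (t e) - unit_vec (s e) :: 'x \<Rightarrow> 'f::field) \<in> incidence_map E s t ` supported_in E"
proof -
  have "incidence_map E s t (unit_vec e) \<in> incidence_map E s t ` supported_in E"
    using assms(2) by (intro imageI) (simp add: supported_in_def unit_vec_def)
  then show ?thesis
    by (simp only: incidence_map_unit_vec[OF assms])
qed

lemma unit_vec_diff_in_incidence_image:
  assumes "finite E" and "(a, c) \<in> weak_rel X E s t"
  shows "(unit_vec c - unit_vec a :: 'x \<Rightarrow> 'f::field) \<in> incidence_map E s t ` supported_in E"
  using assms(2) unfolding weak_rel_def
proof (induction rule: rtrancl_induct)
  case base
  show ?case
    using F.subspace_0[OF subspace_incidence_image[of E s t]] by (simp only: diff_self)
next
  case (step y z)
  consider "z = y" | e where "e \<in> E" "y = s e" "z = t e" | e where "e \<in> E" "y = t e" "z = s e"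
    using step(2) by auto
  then have "(unit_vec z - unit_vec y :: 'x \<Rightarrow> 'f) \<in> incidence_map E s t ` supported_in E"
  proof cases
    case 1
    then show ?thesis
      using F.subspace_0[OF subspace_incidence_image[of E s t]] by (simp only: diff_self)
  next
    case (2 e)
    then show ?thesis
      using edge_vector_in_incidence_image[OF assms(1)] by simp
  next
    case (3 e)
    then show ?thesis
      using F.subspace_neg[OF subspace_incidence_image edge_vector_in_incidence_image[OF assms(1)]]
      by simp
  qed
  with step.IH have "(unit_vec y - unit_vec a) + (unit_vec z - unit_vec y :: 'x \<Rightarrow> 'f)
      \<in> incidence_map E s t ` supported_in E"
    by (rule F.subspace_add[OF subspace_incidence_image])
  moreover have "(unit_vec y - unit_vec a) + (unit_vec z - unit_vec y) = (unit_vec z - unit_vec a :: 'x \<Rightarrow> 'f)"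
    by (simp add: fun_eq_iff)
  ultimately show ?case
    by (simp only:)
qed

lemma incidence_map_in_incidence_image:
  assumes "finite E" and "\<forall>e'\<in>E'. (s' e', t' e') \<in> weak_rel X E s t"
  shows "(incidence_map E' s' t' v :: 'x \<Rightarrow> 'f::field) \<in> incidence_map E s t ` supported_in E"
proof -
  have "incidence_map E' s' t' v
      = (\<Sum>e\<in>E'. fscale (v e) (unit_vec (t' e) - unit_vec (s' e)) :: 'x \<Rightarrow> 'f)"
    by (rule incidence_map_eq_sum)
  also have "\<dots> \<in> incidence_map E s t ` supported_in E"
    by (intro F.subspace_sum[OF subspace_incidence_image]
        F.subspace_scale[OF subspace_incidence_image] unit_vec_diff_in_incidence_image[OF assms(1)])
      (use assms(2) in blast)
  finally show ?thesis .
qed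

locale based_digraph =
  fixes X :: "'x set" and E :: "'e set" and s t :: "'e \<Rightarrow> 'x" and r :: "'x set \<Rightarrow> 'x"
  assumes finite_vertices: "finite X" and finite_edges: "finite E"
    and sources: "s ` E \<subseteq> X" and targets: "t ` E \<subseteq> X"
    and basepoints: "basepoint_choice X E s t r"
begin

abbreviation component_of :: "'x \<Rightarrow> 'x set" where
  "component_of x \<equiv> weak_rel X E s t `` {x}"

abbreviation basepoint :: "'x \<Rightarrow> 'x" where
  "basepoint x \<equiv> r (component_of x)"

abbreviation N :: "'x set" where
  "N \<equiv> nonbase X E s t r"

abbreviation incidence_image :: "('x \<Rightarrow> 'f::field) set" where
  "incidence_image \<equiv> incidence_map E s t ` supported_in E"

lemma component_subset: "x \<in> X \<Longrightarrow> component_of x \<subseteq> X"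
  using weak_rel_closed[OF _ _ sources targets] by blast

lemma mem_component_self: "x \<in> component_of x"
  unfolding weak_rel_def by blast

lemma component_eq:
  assumes "y \<in> component_of x"
  shows "component_of y = component_of x"
proof -
  have xy: "(x, y) \<in> weak_rel X E s t"
    using assms by simp
  then have yx: "(y, x) \<in> weak_rel X E s t"
    by (rule weak_rel_sym)
  show ?thesis
    by (auto intro: weak_rel_trans[OF xy] weak_rel_trans[OF yx])
qed

lemma component_in_weak_components: "x \<in> X \<Longrightarrow> component_of x \<in> weak_components X E s t"
  unfolding weak_components_def by (rule quotientI)

lemma basepoint_in_component: "x \<in> X \<Longrightarrow> basepoint x \<in> component_of x"
  using basepoints component_in_weak_components unfolding basepoint_choice_def by blast

lemma nonbase_iff: "x \<in> N \<longleftrightarrow> x \<in> X \<and> basepoint x \<noteq> x"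
proof
  assume "x \<in> N"
  then obtain C where C: "C \<in> weak_components X E s t" "x \<in> C" "x \<noteq> r C"
    unfolding nonbase_def by blast
  obtain a where a: "a \<in> X" "C = component_of a"
    using C(1) unfolding weak_components_def by (elim quotientE) blast
  then have "component_of x = C" "x \<in> X"
    using C(2) component_eq component_subset by blast+
  then show "x \<in> X \<and> basepoint x \<noteq> x"
    using C(3) by simp
next
  assume x: "x \<in> X \<and> basepoint x \<noteq> x"
  then have "x \<in> component_of x - {basepoint x}"
    using mem_component_self[of x] by auto
  then show "x \<in> N"
    unfolding nonbase_def using component_in_weak_components[of x] x by blast
qed

lemma nonbase_subset: "N \<subseteq> X"
  using nonbase_iff by blast

lemma finite_nonbase: "finite N"
  using nonbase_subset finite_vertices by (rule finite_subset)

lemma edge_endpoints_in_component: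
  "e \<in> E \<Longrightarrow> s e \<in> component_of z \<longleftrightarrow> t e \<in> component_of z"
  by (metis Image_singleton_iff edge_in_weak_rel weak_rel_sym weak_rel_trans)

lemma incidence_image_eq_0_if_vanishes_on_nonbase:
  assumes "w \<in> incidence_image" and "\<forall>x\<in>N. w x = 0"
  shows "w = 0"
proof -
  have "w z = 0" for z
  proof (cases "z \<in> X \<and> basepoint z = z")
    case True
    then have "finite (component_of z)"
      using component_subset finite_vertices finite_subset by blast
    moreover obtain v where "w = incidence_map E s t v"
      using assms(1) by blast
    ultimately have "(\<Sum>y\<in>component_of z. w y) = 0"
      using edge_endpoints_in_component by (simp add: sum_incidence_map_eq_0)
    moreover have "(\<Sum>y\<in>component_of z - {z}. w y) = 0"
    proof (rule sum.neutral, rule ballI)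
      fix y assume y: "y \<in> component_of z - {z}"
      then have "component_of y = component_of z" "y \<in> X"
        using True component_eq component_subset by blast+
      then show "w y = 0"
        using y True assms(2) nonbase_iff by auto
    qed
    ultimately show ?thesis
      using sum.remove[OF \<open>finite (component_of z)\<close> mem_component_self, of w] by simp
  next
    case False
    then have "z \<in> N \<or> z \<notin> X"
      using nonbase_iff by blast
    then show ?thesis
      using assms incidence_map_supported_in[OF sources targets] by (auto simp: supported_in_def)
  qed
  then show ?thesis
    by (simp add: fun_eq_iff)
qed

lemma basepoint_basepoint: "x \<in> X \<Longrightarrow> basepoint (basepoint x) = basepoint x"
  using component_eq[OF basepoint_in_component] by simp

lemma basepoint_image_nonbase: "basepoint ` N \<subseteq> X"
proof (rule image_subsetI)
  fix y assume "y \<in> N"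
  then show "basepoint y \<in> X"
    using nonbase_subset basepoint_in_component component_subset by blast
qed

abbreviation star_incidence :: "('x \<Rightarrow> 'f::field) \<Rightarrow> 'x \<Rightarrow> 'f" where
  "star_incidence \<equiv> incidence_map N basepoint (\<lambda>y. y)"

lemma star_incidence_nonbase:
  assumes "z \<in> N"
  shows "star_incidence u z = u z"
proof -
  have "basepoint y \<noteq> z" if "y \<in> N" for y
  proof
    assume "basepoint y = z"
    then have "basepoint z = z"
      using basepoint_basepoint[of y] that nonbase_subset by auto
    then show False
      using assms nonbase_iff by blast
  qed
  then have "star_incidence u z = (\<Sum>y\<in>N. u y * (if y = z then 1 else 0))"
    unfolding incidence_map_def by (intro sum.cong) auto
  also have "\<dots> = u z"
    using assms finite_nonbase by (simp add: if_distrib[where f="\<lambda>c. _ * c"] cong: if_cong)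
  finally show ?thesis .
qed

lemma star_incidence_in_incidence_image:
  "(star_incidence u :: 'x \<Rightarrow> 'f::field) \<in> incidence_image"
proof (rule incidence_map_in_incidence_image[OF finite_edges], rule ballI)
  fix y assume "y \<in> N"
  then have "(y, basepoint y) \<in> weak_rel X E s t"
    using basepoint_in_component nonbase_iff by blast
  then show "(basepoint y, y) \<in> weak_rel X E s t"
    by (rule weak_rel_sym)
qed

lemma inj_on_star_incidence: "inj_on (star_incidence :: ('x \<Rightarrow> 'f::field) \<Rightarrow> _) (supported_in N)"
proof (rule inj_onI)
  fix u u' :: "'x \<Rightarrow> 'f"
  assume "u \<in> supported_in N" "u' \<in> supported_in N" and eq: "star_incidence u = star_incidence u'"
  show "u = u'"
  proof
    fix x
    show "u x = u' x"
    proof (cases "x \<in> N")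
      case True
      then show ?thesis
        using star_incidence_nonbase[OF True] eq by metis
    next
      case False
      then show ?thesis
        using \<open>u \<in> supported_in N\<close> \<open>u' \<in> supported_in N\<close> by (simp add: supported_in_def)
    qed
  qed
qed

lemma star_incidence_restrict:
  fixes w :: "'x \<Rightarrow> 'f::field"
  assumes "w \<in> incidence_image"
  shows "star_incidence (\<lambda>x. if x \<in> N then w x else 0) = w"
proof -
  let ?d = "star_incidence (\<lambda>x. if x \<in> N then w x else 0) - w"
  have "?d \<in> incidence_image"
    using F.subspace_diff[OF subspace_incidence_image star_incidence_in_incidence_image assms] .
  moreover have "\<forall>x\<in>N. ?d x = 0"
    by (simp add: star_incidence_nonbase)
  ultimately have "?d = 0"
    by (rule incidence_image_eq_0_if_vanishes_on_nonbase)
  then show ?thesis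
    by simp
qed

lemma ker_A_subset_supported_in: "ker_A scale X E s t r \<phi> \<subseteq> supported_in N"
  unfolding ker_A_def by blast

context
  fixes scale :: "'f::field \<Rightarrow> 'u::ab_group_add \<Rightarrow> 'u" and \<phi> :: "'x \<Rightarrow> 'u"
  assumes scale_vector_space: "vector_space scale"
begin

lemma A_map_eq_lin_ext_star_incidence:
  "A_map scale X E s t r \<phi> u = lin_ext scale X \<phi> (star_incidence u)"
  using nonbase_subset
  by (simp add: lin_ext_incidence_map[OF scale_vector_space finite_vertices basepoint_image_nonbase]
      A_map_def rel_vec_def)

lemma star_incidence_image_ker_A:
  "star_incidence ` ker_A scale X E s t r \<phi>
     = incidence_image \<inter> {w \<in> supported_in X. lin_ext scale X \<phi> w = 0}"
proof (intro equalityI subsetI)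
  fix w assume "w \<in> star_incidence ` ker_A scale X E s t r \<phi>"
  then obtain u where "u \<in> ker_A scale X E s t r \<phi>" "w = star_incidence u"
    by blast
  moreover have "star_incidence u \<in> supported_in X"
    using nonbase_subset basepoint_image_nonbase by (intro incidence_map_supported_in) auto
  ultimately show "w \<in> incidence_image \<inter> {w \<in> supported_in X. lin_ext scale X \<phi> w = 0}"
    using star_incidence_in_incidence_image A_map_eq_lin_ext_star_incidence
    by (simp add: ker_A_def)
next
  fix w assume w: "w \<in> incidence_image \<inter> {w \<in> supported_in X. lin_ext scale X \<phi> w = 0}"
  define u where "u = (\<lambda>x. if x \<in> N then w x else 0)"
  have "star_incidence u = w"
    unfolding u_def using w by (intro star_incidence_restrict) blast
  moreover have "u \<in> ker_A scale X E s t r \<phi>"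
    using w A_map_eq_lin_ext_star_incidence[of u] \<open>star_incidence u = w\<close>
    by (simp add: ker_A_def supported_in_def u_def)
  ultimately show "w \<in> star_incidence ` ker_A scale X E s t r \<phi>"
    by blast
qed

lemma defect_eq_dim_ker_A: "defect scale X E s t \<phi> = F.dim (ker_A scale X E s t r \<phi>)"
proof -
  have "F.span (ker_A scale X E s t r \<phi>) \<subseteq> supported_in N"
    using F.span_minimal[OF ker_A_subset_supported_in subspace_supported_in] .
  then have "inj_on star_incidence (F.span (ker_A scale X E s t r \<phi>))"
    using inj_on_star_incidence by (rule inj_on_subset[rotated])
  then have "F.dim (star_incidence ` ker_A scale X E s t r \<phi>) = F.dim (ker_A scale X E s t r \<phi>)"
    by (rule linear.dim_image_eq_of_inj_on_span[OF linear_incidence_map])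
  then show ?thesis
    unfolding defect_def star_incidence_image_ker_A .
qed

lemma defect_eq_0_iff_lin_indep_family:
  "defect scale X E s t \<phi> = 0 \<longleftrightarrow> lin_indep_family scale N (rel_vec X E s t r \<phi>)"
proof -
  have "ker_A scale X E s t r \<phi> \<subseteq> F.span (unit_vec ` X)"
    using ker_A_subset_supported_in supported_in_mono[OF nonbase_subset]
      supported_in_subset_span[OF finite_vertices]
    by blast
  then have "defect scale X E s t \<phi> = 0 \<longleftrightarrow> ker_A scale X E s t r \<phi> \<subseteq> {0}"
    unfolding defect_eq_dim_ker_A using finite_vertices by (intro F.dim_eq_0_iff_subset_zero) auto
  also have "\<dots> \<longleftrightarrow> lin_indep_family scale N (rel_vec X E s t r \<phi>)"
    unfolding lin_indep_family_iff_kernel_trivial ker_A_def A_map_def ..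
  finally show ?thesis .
qed

lemma lin_indep_family_rel_vec_iff_aff_indep_family:
  assumes "weakly_connected X E s t"
  shows "lin_indep_family scale N (rel_vec X E s t r \<phi>) \<longleftrightarrow> aff_indep_family scale X \<phi>"
proof (cases "X = {}")
  case True
  then show ?thesis
    using nonbase_subset by (simp add: lin_indep_family_def aff_indep_family_def)
next
  case False
  have component_X: "component_of x = X" if "x \<in> X" for x
    using assms that component_subset[OF that] unfolding weakly_connected_def by auto
  then have basepoint_X: "basepoint x = r X" if "x \<in> X" for x
    using that by simp
  obtain x0 where x0: "x0 \<in> X"
    using False by blast
  have "r X \<in> X"
    using basepoint_in_component[OF x0] component_X[OF x0] by simp
  have nonbase_eq: "N = X - {r X}"
    using nonbase_iff basepoint_X by auto
  have "lin_indep_family scale N (rel_vec X E s t r \<phi>)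
      \<longleftrightarrow> lin_indep_family scale (X - {r X}) (\<lambda>x. \<phi> x - \<phi> (r X))"
    unfolding nonbase_eq
    by (rule lin_indep_family_cong) (simp add: rel_vec_def basepoint_X)
  also have "\<dots> \<longleftrightarrow> aff_indep_family scale X \<phi>"
    using aff_indep_family_iff_lin_indep_family_diff[OF scale_vector_space finite_vertices \<open>r X \<in> X\<close>] ..
  finally show ?thesis .
qed

end

end

theorem proposition2p10:
  fixes scale :: "'f::field \<Rightarrow> 'u::ab_group_add \<Rightarrow> 'u"
    and X :: "'x set" and E :: "'e set" and s t :: "'e \<Rightarrow> 'x"
    and \<phi> :: "'x \<Rightarrow> 'u" and r :: "'x set \<Rightarrow> 'x"
  assumes "vector_space scale"
    and "finite X" and "finite E"
    and "s ` E \<subseteq> X" and "t ` E \<subseteq> X"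
    and "basepoint_choice X E s t r"
  shows "defect scale X E s t \<phi> =
           vector_space.dim (fscale :: 'f \<Rightarrow> ('x \<Rightarrow> 'f) \<Rightarrow> _) (ker_A scale X E s t r \<phi>)
       \<and> (\<forall>r'. basepoint_choice X E s t r' \<longrightarrow>
             vector_space.dim (fscale :: 'f \<Rightarrow> ('x \<Rightarrow> 'f) \<Rightarrow> _) (ker_A scale X E s t r' \<phi>)
           = vector_space.dim (fscale :: 'f \<Rightarrow> ('x \<Rightarrow> 'f) \<Rightarrow> _) (ker_A scale X E s t r \<phi>))
       \<and> (defect scale X E s t \<phi> = 0 \<longleftrightarrow>
             lin_indep_family scale (nonbase X E s t r) (rel_vec X E s t r \<phi>))
       \<and> (weakly_connected X E s t \<longrightarrow>
             (defect scale X E s t \<phi> = 0 \<longleftrightarrow> aff_indep_family scale X \<phi>))"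
proof -
  interpret based_digraph X E s t r
    using assms(2-6) by unfold_locales
  have basepoint_independence: "F.dim (ker_A scale X E s t r' \<phi>) = F.dim (ker_A scale X E s t r \<phi>)"
    if "basepoint_choice X E s t r'" for r'
  proof -
    interpret other: based_digraph X E s t r'
      using assms(2-5) that by unfold_locales
    show ?thesis
      using other.defect_eq_dim_ker_A[OF assms(1)] defect_eq_dim_ker_A[OF assms(1)] by simp
  qed
  show ?thesis
    using defect_eq_dim_ker_A[OF assms(1)] basepoint_independence
      defect_eq_0_iff_lin_indep_family[OF assms(1)]
      lin_indep_family_rel_vec_iff_aff_indep_family[OF assms(1)]
    by blast
qed

end
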